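(* Let $n$ agents communicate over an undirected connected graph with adjacency matrix $A=[a_{ij}]\in\{0,1\}^{n\times n}$ ($a_{ij}=a_{ji}$, $a_{ii}=0$). Each agent $i$ has a time-varying reference signal $r_i:[0,\infty)\to\mathbb{R}^m$ with $\dot r_i(t)=f_i(t)$, and a state $x_i(t)\in\mathbb{R}^m$ updated by $$\dot x_i(t)=f_i(t)+\kappa\sum_{j=1}^n a_{ij}\big(x_j(t)-x_i(t)\big),\qquad x_i(0)=r_i(0),$$ where $\kappa>0$ is a constant. Fix an agent $i$ and consider the following observer, run by an external eavesdropper who knows $A$, $\kappa$ and the trajectories $x_j(t)$ of all agents $j$: $$\begin{aligned} \dot{\hat x}_i(t)&=\hat f_i(t)+\kappa\sum_{j=1}^n a_{ij}\big(x_j(t)-x_i(t)\big)+k_1\tilde x_i(t),\\ \dot{\hat r}_i(t)&=k_2\big(x_i(t)-z_i(t)-\hat r_i(t)\big)+\hat f_i(t),\\ \hat f_i(t)&=k_3x_i(t)+\hat f_i'(t),\\ \dot{\hat f}_i'(t)&=-k_3\Big(\hat f_i(t)+\kappa\sum_{j=1}^n a_{ij}\big(x_j(t)-x_i(t)\big)\Big)+k_4\tilde x_i(t), \end{aligned}$$ where $\tilde x_i(t)=x_i(t)-\hat x_i(t)$, $k_1,k_2,k_3,k_4$ are positive constants, and $z_i$ is the filter $\dot z_i(t)=\kappa\sum_{j=1}^n a_{ij}(x_j(t)-x_i(t))$, $z_i(0)=0$ (initial values of $\hat x_i,\hat r_i,\hat f_i'$ arbitrary). Assume $r_i$, $f_i$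 and $\dot f_i$ are bounded on $[0,\infty)$. Then the positive constants $k_1,\dots,k_4$ can be designed so that: (1) the estimation errors $\tilde r_i(t)=r_i(t)-\hat r_i(t)$ and $\tilde f_i(t)=f_i(t)-\hat f_i(t)$ are uniformly ultimately bounded; and (2) if in addition $\dot f_i\in\mathcal{L}_2$, then $\tilde r_i(t)\to0$ and $\tilde f_i(t)\to0$ as $t\to\infty$.
   Context: Uniformly ultimately bounded is in the standard sense of nonlinear systems theory (Khalil): there is a bound $b$ such that for every initial condition there is a time $T$ after which the error norm stays below $b$. $\mathcal{L}_2$ denotes square-integrable functions on $[0,\infty)$. *)

theory Defs
  imports "HOL-Analysis.Analysis"
begin

text \<open>Agents are indexed by 0..n-1; the adjacency matrix is a function on indices.\<close>

definition adjacency_matrix :: "nat \<Rightarrow> (nat \<Rightarrow> nat \<Rightarrow> real) \<Rightarrow> bool" where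
  "adjacency_matrix n A \<longleftrightarrow>
     (\<forall>i<n. \<forall>j<n. (A i j = 0 \<or> A i j = 1) \<and> A i j = A j i) \<and> (\<forall>i<n. A i i = 0)"

definition graph_connected :: "nat \<Rightarrow> (nat \<Rightarrow> nat \<Rightarrow> real) \<Rightarrow> bool" where
  "graph_connected n A \<longleftrightarrow>
     (\<forall>i<n. \<forall>j<n. (i, j) \<in> {(p, q). p < n \<and> q < n \<and> A p q = 1}\<^sup>*)"

definition coupling ::
  "nat \<Rightarrow> (nat \<Rightarrow> nat \<Rightarrow> real) \<Rightarrow> real \<Rightarrow> (nat \<Rightarrow> real \<Rightarrow> 'a::real_vector) \<Rightarrow> nat \<Rightarrow> real \<Rightarrow> 'a" where
  "coupling n A \<kappa> x i t = \<kappa> *\<^sub>R (\<Sum>j<n. A i j *\<^sub>R (x j t - x i t))"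

end

theory Submission
  imports Defs
begin

text \<open>
  With all four gains equal to one, the estimation errors
  \<open>e\<^sub>x = x\<^sub>i - \<hat>x\<^sub>i\<close>, \<open>e\<^sub>f = f\<^sub>i - \<hat>f\<^sub>i\<close>, \<open>e\<^sub>r = r\<^sub>i - \<hat>r\<^sub>i\<close>
  obey the autonomous linear system
  \<open>e\<^sub>x' = e\<^sub>f - e\<^sub>x\<close>, \<open>e\<^sub>f' = f\<^sub>i' - e\<^sub>f - e\<^sub>x\<close>, \<open>e\<^sub>r' = e\<^sub>f - e\<^sub>r\<close>:
  the coupling term cancels, and the filter \<open>z\<^sub>i\<close> integrates exactly the coupling part
  of \<open>x\<^sub>i'\<close>, so \<open>x\<^sub>i - z\<^sub>i = r\<^sub>i\<close>.
  The energy \<open>V = |e\<^sub>x|\<^sup>2 + |e\<^sub>f|\<^sup>2 + |e\<^sub>r|\<^sup>2\<close> satisfies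
  \<open>V' \<le> 2 |f\<^sub>i'|\<^sup>2 - V / 2\<close>, so by comparison with the linear equation \<open>V\<close> ends up below
  \<open>4 sup |f\<^sub>i'|\<^sup>2 + 1\<close>, and tends to zero when \<open>f\<^sub>i'\<close> is square integrable.
\<close>

lemma has_real_derivative_inner_self:
  fixes u :: "real \<Rightarrow> 'a::real_inner"
  assumes "(u has_vector_derivative u') (at t within S)"
  shows "((\<lambda>s. u s \<bullet> u s) has_real_derivative 2 * (u t \<bullet> u')) (at t within S)"
proof -
  have "(u has_derivative (\<lambda>h. h *\<^sub>R u')) (at t within S)"
    using assms by (simp add: has_vector_derivative_def)
  from has_derivative_inner[OF this this]
  have "((\<lambda>s. u s \<bullet> u s) has_derivative (\<lambda>h. h * (2 * (u t \<bullet> u')))) (at t within S)"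
    by (simp add: inner_commute algebra_simps)
  then show ?thesis
    by (simp add: has_field_derivative_def mult_commute_abs)
qed

lemma differential_inequality_exp_bound:
  fixes W g :: "real \<Rightarrow> real"
  assumes "0 < a" and "T \<le> t"
    and W_deriv: "\<And>s. s \<in> {T..t} \<Longrightarrow>
      \<exists>W'. (W has_real_derivative W') (at s within {T..t}) \<and> W' \<le> c - a * W s + g s"
    and g_nonneg: "\<And>s. s \<in> {T..t} \<Longrightarrow> 0 \<le> g s"
    and g_integral: "(g has_integral I) {T..t}"
  shows "W t - c / a \<le> exp (- a * (t - T)) * (W T - c / a) + I"
proof -
  obtain W' where W': "\<And>s. s \<in> {T..t} \<Longrightarrow> (W has_real_derivative W' s) (at s within {T..t})"
    and W'_le: "\<And>s. s \<in> {T..t} \<Longrightarrow> W' s \<le> c - a * W s + g s"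
    using W_deriv by metis
  define Y where "Y s = exp (a * s) * (W s - c / a)" for s
  have Y_deriv: "(Y has_vector_derivative exp (a * s) * (W' s + a * W s - c)) (at s within {T..t})"
    if "s \<in> {T..t}" for s
    unfolding Y_def has_real_derivative_iff_has_vector_derivative[symmetric]
    using W'[OF that] \<open>0 < a\<close>
    by (auto intro!: derivative_eq_intros simp: field_simps)
  have "exp (a * s) * (W' s + a * W s - c) \<le> exp (a * t) * g s" if "s \<in> {T..t}" for s
  proof -
    have "exp (a * s) * (W' s + a * W s - c) \<le> exp (a * s) * g s"
      using W'_le[OF that] by (intro mult_left_mono) auto
    also have "\<dots> \<le> exp (a * t) * g s"
      using that g_nonneg[OF that] \<open>0 < a\<close> by (intro mult_right_mono) auto
    finally show ?thesis .
  qed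
  moreover have "((\<lambda>s. exp (a * s) * (W' s + a * W s - c)) has_integral Y t - Y T) {T..t}"
    by (rule fundamental_theorem_of_calculus[OF \<open>T \<le> t\<close> Y_deriv])
  ultimately have "Y t - Y T \<le> exp (a * t) * I"
    using has_integral_le[OF _ has_integral_mult_right[OF g_integral]] by blast
  moreover have "exp (a * T) = exp (a * t) * exp (- a * (t - T))"
    by (simp add: exp_add[symmetric] algebra_simps)
  ultimately have
    "exp (a * t) * (W t - c / a) \<le> exp (a * t) * (exp (- a * (t - T)) * (W T - c / a) + I)"
    unfolding Y_def by (simp add: algebra_simps)
  then show ?thesis
    by simp
qed

lemma tendsto_exp_decay_zero:
  fixes a T c :: real
  assumes "0 < a"
  shows "((\<lambda>t. exp (- (t - T) / a) * c) \<longlongrightarrow> 0) at_top"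
proof -
  have "filterlim (\<lambda>t. - (t - T) / a) at_bot at_top"
  proof (subst filterlim_at_bot, intro allI)
    fix Z :: real
    show "eventually (\<lambda>t. - (t - T) / a \<le> Z) at_top"
      using eventually_ge_at_top[of "T - a * Z"]
      by eventually_elim (use \<open>0 < a\<close> in \<open>simp add: field_simps\<close>)
  qed
  then show ?thesis
    by (intro tendsto_mult_left_zero filterlim_compose[OF exp_at_bot])
qed

lemma nonneg_integrable_tail_le:
  fixes g :: "real \<Rightarrow> real"
  assumes g_integrable: "g integrable_on {a..}" and g_nonneg: "\<And>s. a \<le> s \<Longrightarrow> 0 \<le> g s"
    and "0 < \<epsilon>"
  obtains T where "a \<le> T" "\<And>t. T \<le> t \<Longrightarrow> integral {T..t} g \<le> \<epsilon>"
proof -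
  define F where "F t = integral {a..t} g" for t
  have F_le: "F t \<le> integral {a..} g" for t
    unfolding F_def
    by (rule integral_subset_le)
      (auto intro: integrable_on_subinterval[OF g_integrable] g_integrable g_nonneg)
  then have bdd: "bdd_above (F ` {a..})"
    by (intro bdd_aboveI[of _ "integral {a..} g"]) auto
  define S where "S = (SUP t\<in>{a..}. F t)"
  obtain T where T: "a \<le> T" "S - \<epsilon> < F T"
    using less_cSUP_iff[OF _ bdd, of "S - \<epsilon>"] \<open>0 < \<epsilon>\<close> unfolding S_def by force
  show thesis
  proof (rule that[OF \<open>a \<le> T\<close>])
    fix t assume "T \<le> t"
    have "F T + integral {T..t} g = F t"
      unfolding F_def using T \<open>T \<le> t\<close>
      by (intro Henstock_Kurzweil_Integration.integral_combine integrable_on_subinterval[OF g_integrable])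
        (auto simp del: atLeastAtMost_iff)
    moreover have "F t \<le> S"
      unfolding S_def using bdd T \<open>T \<le> t\<close> by (intro cSUP_upper) auto
    ultimately show "integral {T..t} g \<le> \<epsilon>"
      using T by linarith
  qed
qed

lemma filter_recovers_reference:
  fixes x z r f c :: "real \<Rightarrow> 'a::real_normed_vector"
  assumes x_deriv: "\<And>t. 0 \<le> t \<Longrightarrow> (x has_vector_derivative (f t + c t)) (at t within {0..})"
    and z_deriv: "\<And>t. 0 \<le> t \<Longrightarrow> (z has_vector_derivative c t) (at t within {0..})"
    and r_deriv: "\<And>t. 0 \<le> t \<Longrightarrow> (r has_vector_derivative f t) (at t within {0..})"
    and "x 0 = r 0" "z 0 = 0" "0 \<le> t"
  shows "x t - z t = r t"
proof -
  have deriv_zero: "((\<lambda>s. x s - z s - r s) has_vector_derivative 0) (at s within {0..})"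
    if "s \<in> {0..}" for s
    using x_deriv[of s] z_deriv[of s] r_deriv[of s] that
    by (auto intro!: derivative_eq_intros)
  obtain e where "\<And>s. s \<in> {0..} \<Longrightarrow> x s - z s - r s = e"
    using has_vector_derivative_zero_constant[OF convex_real_interval(1) deriv_zero] by blast
  from this[of 0] this[of t] show ?thesis
    using assms(4-) by (simp add: algebra_simps)
qed

locale unit_gain_error_dynamics =
  fixes ex ef er d :: "real \<Rightarrow> 'a::real_inner"
  assumes ex_deriv: "\<And>t. 0 \<le> t \<Longrightarrow> (ex has_vector_derivative (ef t - ex t)) (at t within {0..})"
    and ef_deriv: "\<And>t. 0 \<le> t \<Longrightarrow> (ef has_vector_derivative (d t - ef t - ex t)) (at t within {0..})"
    and er_deriv: "\<And>t. 0 \<le> t \<Longrightarrow> (er has_vector_derivative (ef t - er t)) (at t within {0..})"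
begin

definition energy :: "real \<Rightarrow> real" where
  "energy t = ex t \<bullet> ex t + ef t \<bullet> ef t + er t \<bullet> er t"

lemma energy_nonneg: "0 \<le> energy t"
  unfolding energy_def by (intro add_nonneg_nonneg) auto

lemma norm_le_sqrt_energy: "norm (ef t) \<le> sqrt (energy t)" "norm (er t) \<le> sqrt (energy t)"
  unfolding energy_def norm_eq_sqrt_inner by (auto intro: real_sqrt_le_mono)

lemma energy_dissipation:
  assumes "0 \<le> t"
  shows "\<exists>E'. (energy has_real_derivative E') (at t within {0..}) \<and>
           E' \<le> 2 * (norm (d t))\<^sup>2 - energy t / 2"
proof -
  define E' where
    "E' = 2 * (ex t \<bullet> (ef t - ex t)) + 2 * (ef t \<bullet> (d t - ef t - ex t)) + 2 * (er t \<bullet> (ef t - er t))"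
  have "(energy has_real_derivative E') (at t within {0..})"
    unfolding energy_def[abs_def] E'_def
    using ex_deriv ef_deriv er_deriv assms by (intro DERIV_add has_real_derivative_inner_self)
  have "4 * (norm (d t))\<^sup>2 - energy t - 2 * E'
      = 3 * (norm (ex t))\<^sup>2 + (norm (er t))\<^sup>2 + 2 * (norm (er t - ef t))\<^sup>2
        + (norm (ef t - 2 *\<^sub>R d t))\<^sup>2"
    unfolding energy_def E'_def power2_norm_eq_inner
    by (simp add: inner_diff_left inner_diff_right inner_commute algebra_simps)
  moreover have "0 \<le> 3 * (norm (ex t))\<^sup>2 + (norm (er t))\<^sup>2 + 2 * (norm (er t - ef t))\<^sup>2
      + (norm (ef t - 2 *\<^sub>R d t))\<^sup>2"
    by simp
  ultimately have "E' \<le> 2 * (norm (d t))\<^sup>2 - energy t / 2"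
    by linarith
  with \<open>(energy has_real_derivative E') (at t within {0..})\<close> show ?thesis
    by blast
qed

lemma energy_comparison:
  assumes "0 \<le> T" "T \<le> t" and g_integral: "(g has_integral I) {T..t}"
    and g_nonneg: "\<And>s. s \<in> {T..t} \<Longrightarrow> 0 \<le> g s"
    and d_bound: "\<And>s. s \<in> {T..t} \<Longrightarrow> 2 * (norm (d s))\<^sup>2 \<le> c + g s"
  shows "energy t - 2 * c \<le> exp (- (t - T) / 2) * (energy T - 2 * c) + I"
proof -
  have "energy t - c / (1/2) \<le> exp (- (1/2) * (t - T)) * (energy T - c / (1/2)) + I"
  proof (rule differential_inequality_exp_bound[OF _ \<open>T \<le> t\<close> _ g_nonneg g_integral])
    fix s assume s: "s \<in> {T..t}"
    with \<open>0 \<le> T\<close> have "0 \<le> s" by simp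
    then obtain E' where E'_deriv: "(energy has_real_derivative E') (at s within {0..})"
      and E'_le: "E' \<le> 2 * (norm (d s))\<^sup>2 - energy s / 2"
      using energy_dissipation by blast
    have "(energy has_real_derivative E') (at s within {T..t})"
      using E'_deriv by (rule has_field_derivative_subset) (use \<open>0 \<le> T\<close> in auto)
    moreover have "E' \<le> c - 1/2 * energy s + g s"
      using E'_le d_bound[OF s] by linarith
    ultimately show "\<exists>E'. (energy has_real_derivative E') (at s within {T..t}) \<and>
                       E' \<le> c - 1/2 * energy s + g s"
      by blast
  qed simp
  moreover have "c / (1/2) = 2 * c" "- (1/2) * (t - T) = - (t - T) / 2"
    by (simp_all add: field_simps)
  ultimately show ?thesis
    by (simp only:)
qed

lemma eventually_energy_le:
  assumes d_bound: "\<And>t. 0 \<le> t \<Longrightarrow> norm (d t) \<le> D"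
  shows "eventually (\<lambda>t. energy t \<le> 4 * D\<^sup>2 + 1) at_top"
proof -
  have energy_le: "energy t \<le> 4 * D\<^sup>2 + exp (- t / 2) * energy 0" if "0 \<le> t" for t
  proof -
    have "(norm (d s))\<^sup>2 \<le> D\<^sup>2" if "0 \<le> s" for s
      using d_bound[OF that] by (intro power_mono) auto
    then have "energy t - 2 * (2 * D\<^sup>2) \<le> exp (- t / 2) * (energy 0 - 2 * (2 * D\<^sup>2)) + 0"
      using energy_comparison[where T = 0 and g = "\<lambda>_. 0" and I = 0 and c = "2 * D\<^sup>2",
          unfolded diff_zero] \<open>0 \<le> t\<close>
      by auto
    moreover have "exp (- t / 2) * (energy 0 - 2 * (2 * D\<^sup>2)) \<le> exp (- t / 2) * energy 0"
      by (intro mult_left_mono) auto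
    ultimately show ?thesis
      by linarith
  qed
  have "((\<lambda>t. exp (- t / 2) * energy 0) \<longlongrightarrow> 0) at_top"
    using tendsto_exp_decay_zero[of 2 0 "energy 0"] by simp
  then have "eventually (\<lambda>t. exp (- t / 2) * energy 0 < 1) at_top"
    by (rule order_tendstoD) simp
  then show ?thesis
    using eventually_ge_at_top[of 0]
  proof eventually_elim
    case (elim t)
    then show ?case
      using energy_le[of t] by linarith
  qed
qed

lemma energy_tendsto_zero:
  assumes d_L2: "(\<lambda>t. (norm (d t))\<^sup>2) integrable_on {0..}"
  shows "(energy \<longlongrightarrow> 0) at_top"
proof (rule order_tendstoI)
  fix a :: real assume "a < 0"
  then show "eventually (\<lambda>t. a < energy t) at_top"
    using energy_nonneg by (auto intro: always_eventually less_le_trans)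
next
  fix \<epsilon> :: real assume "0 < \<epsilon>"
  define g where "g t = 2 * (norm (d t))\<^sup>2" for t
  have g_integrable: "g integrable_on {0..}"
    unfolding g_def using integrable_on_cmult_left[OF d_L2] by simp
  obtain T where "0 \<le> T" and tail: "\<And>t. T \<le> t \<Longrightarrow> integral {T..t} g \<le> \<epsilon> / 2"
    using nonneg_integrable_tail_le[OF g_integrable _, of "\<epsilon> / 2"] \<open>0 < \<epsilon>\<close> unfolding g_def by auto
  have energy_le: "energy t \<le> exp (- (t - T) / 2) * energy T + \<epsilon> / 2" if "T \<le> t" for t
  proof -
    have "energy t - 2 * 0 \<le> exp (- (t - T) / 2) * (energy T - 2 * 0) + integral {T..t} g"
      using \<open>0 \<le> T\<close> that integrable_on_subinterval[OF g_integrable, of T t]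
      by (intro energy_comparison[where g = g]) (auto simp: g_def)
    then show ?thesis
      using tail[OF that] by simp
  qed
  have "((\<lambda>t. exp (- (t - T) / 2) * energy T) \<longlongrightarrow> 0) at_top"
    using tendsto_exp_decay_zero[of 2 T "energy T"] by simp
  then have "eventually (\<lambda>t. exp (- (t - T) / 2) * energy T < \<epsilon> / 2) at_top"
    by (rule order_tendstoD) (simp add: \<open>0 < \<epsilon>\<close>)
  then show "eventually (\<lambda>t. energy t < \<epsilon>) at_top"
    using eventually_ge_at_top[of T]
  proof eventually_elim
    case (elim t)
    then show ?case
      using energy_le[of t] by linarith
  qed
qed

lemma eventually_errors_le:
  assumes "\<And>t. 0 \<le> t \<Longrightarrow> norm (d t) \<le> D"
  shows "eventually (\<lambda>t. norm (er t) \<le> sqrt (4 * D\<^sup>2 + 1) \<and> norm (ef t) \<le> sqrt (4 * D\<^sup>2 + 1))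
           at_top"
  using eventually_energy_le[OF assms]
proof (rule eventually_mono)
  fix t assume "energy t \<le> 4 * D\<^sup>2 + 1"
  then have "sqrt (energy t) \<le> sqrt (4 * D\<^sup>2 + 1)"
    by (rule real_sqrt_le_mono)
  then show "norm (er t) \<le> sqrt (4 * D\<^sup>2 + 1) \<and> norm (ef t) \<le> sqrt (4 * D\<^sup>2 + 1)"
    using norm_le_sqrt_energy[of t] by linarith
qed

lemma errors_tendsto_zero:
  assumes "(\<lambda>t. (norm (d t))\<^sup>2) integrable_on {0..}"
  shows "(er \<longlongrightarrow> 0) at_top" "(ef \<longlongrightarrow> 0) at_top"
proof -
  have sqrt_energy: "((\<lambda>t. sqrt (energy t)) \<longlongrightarrow> 0) at_top"
    using tendsto_real_sqrt[OF energy_tendsto_zero[OF assms]] by simp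
  have "((\<lambda>t. norm (er t)) \<longlongrightarrow> 0) at_top" "((\<lambda>t. norm (ef t)) \<longlongrightarrow> 0) at_top"
    by (rule real_tendsto_sandwich[OF _ _ tendsto_const sqrt_energy];
        auto intro: always_eventually norm_le_sqrt_energy)+
  then show "(er \<longlongrightarrow> 0) at_top" "(ef \<longlongrightarrow> 0) at_top"
    by (simp_all add: tendsto_norm_zero_iff)
qed

end

text \<open>
  Here \<open>x\<close> is the state \<open>x\<^sub>i\<close> of the observed agent and \<open>c\<close> its coupling input
  \<open>\<kappa> \<Sum>\<^sub>j a\<^sub>i\<^sub>j (x\<^sub>j - x\<^sub>i)\<close>; the frequency estimate \<open>\<hat>f\<^sub>i\<close> is \<open>k\<^sub>3 x + fp\<close>.
\<close>

definition observer_equations ::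
  "real \<Rightarrow> real \<Rightarrow> real \<Rightarrow> real \<Rightarrow> (real \<Rightarrow> 'a::real_normed_vector) \<Rightarrow> (real \<Rightarrow> 'a) \<Rightarrow>
    (real \<Rightarrow> 'a) \<Rightarrow> (real \<Rightarrow> 'a) \<Rightarrow> (real \<Rightarrow> 'a) \<Rightarrow> (real \<Rightarrow> 'a) \<Rightarrow> bool"
where
  "observer_equations k1 k2 k3 k4 x c xh rh fp z \<longleftrightarrow>
    (\<forall>t\<ge>0. (xh has_vector_derivative ((k3 *\<^sub>R x t + fp t) + c t + k1 *\<^sub>R (x t - xh t)))
      (at t within {0..})) \<and>
    (\<forall>t\<ge>0. (rh has_vector_derivative (k2 *\<^sub>R (x t - z t - rh t) + (k3 *\<^sub>R x t + fp t)))
      (at t within {0..})) \<and>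
    (\<forall>t\<ge>0. (fp has_vector_derivative (- k3 *\<^sub>R ((k3 *\<^sub>R x t + fp t) + c t) + k4 *\<^sub>R (x t - xh t)))
      (at t within {0..})) \<and>
    (\<forall>t\<ge>0. (z has_vector_derivative c t) (at t within {0..})) \<and>
    z 0 = 0"

context
  fixes r f x c d :: "real \<Rightarrow> 'a::real_inner"
  assumes r_deriv: "\<And>t. 0 \<le> t \<Longrightarrow> (r has_vector_derivative f t) (at t within {0..})"
    and x_deriv: "\<And>t. 0 \<le> t \<Longrightarrow> (x has_vector_derivative (f t + c t)) (at t within {0..})"
    and x_init: "x 0 = r 0"
    and f_deriv: "\<And>t. 0 \<le> t \<Longrightarrow> (f has_vector_derivative d t) (at t within {0..})"
begin

lemma unit_gain_observer_error_dynamics: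
  assumes "observer_equations 1 1 1 1 x c xh rh fp z"
  shows "unit_gain_error_dynamics (\<lambda>t. x t - xh t) (\<lambda>t. f t - (x t + fp t)) (\<lambda>t. r t - rh t) d"
proof unfold_locales
  fix t :: real assume t: "0 \<le> t"
  from assms t have
    xh_deriv: "(xh has_vector_derivative ((x t + fp t) + c t + (x t - xh t))) (at t within {0..})"
    and rh_deriv: "(rh has_vector_derivative ((x t - z t - rh t) + (x t + fp t))) (at t within {0..})"
    and fp_deriv: "(fp has_vector_derivative (- ((x t + fp t) + c t) + (x t - xh t))) (at t within {0..})"
    and z_deriv: "\<And>s. 0 \<le> s \<Longrightarrow> (z has_vector_derivative c s) (at s within {0..})"
    and "z 0 = 0"
    unfolding observer_equations_def by auto
  have "x t - z t = r t"
    by (rule filter_recovers_reference[OF x_deriv z_deriv r_deriv x_init \<open>z 0 = 0\<close> t])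
  then show "((\<lambda>t. r t - rh t) has_vector_derivative (f t - (x t + fp t) - (r t - rh t)))
      (at t within {0..})"
    by (intro has_vector_derivative_eq_rhs[OF has_vector_derivative_diff[OF r_deriv[OF t] rh_deriv]])
      (simp add: algebra_simps)
  show "((\<lambda>t. x t - xh t) has_vector_derivative (f t - (x t + fp t) - (x t - xh t)))
      (at t within {0..})"
    by (intro has_vector_derivative_eq_rhs[OF has_vector_derivative_diff[OF x_deriv[OF t] xh_deriv]])
      (simp add: algebra_simps)
  show "((\<lambda>t. f t - (x t + fp t)) has_vector_derivative (d t - (f t - (x t + fp t)) - (x t - xh t)))
      (at t within {0..})"
    by (intro has_vector_derivative_eq_rhs[OF has_vector_derivative_diff[OF f_deriv[OF t]
          has_vector_derivative_add[OF x_deriv[OF t] fp_deriv]]])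
      (simp add: algebra_simps)
qed

lemma unit_gain_observer_ultimately_bounded:
  assumes "bounded (d ` {0..})"
  shows "\<exists>b. \<forall>xh rh fp z. observer_equations 1 1 1 1 x c xh rh fp z \<longrightarrow>
           (\<exists>T. \<forall>t\<ge>T. norm (r t - rh t) \<le> b \<and> norm (f t - (x t + fp t)) \<le> b)"
proof -
  obtain D where D: "\<And>t. 0 \<le> t \<Longrightarrow> norm (d t) \<le> D"
    using assms unfolding bounded_iff by auto
  show ?thesis
  proof (rule exI[of _ "sqrt (4 * D\<^sup>2 + 1)"], intro allI impI)
    fix xh rh fp z
    assume "observer_equations 1 1 1 1 x c xh rh fp z"
    then interpret unit_gain_error_dynamics
      "\<lambda>t. x t - xh t" "\<lambda>t. f t - (x t + fp t)" "\<lambda>t. r t - rh t" d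
      by (rule unit_gain_observer_error_dynamics)
    show "\<exists>T. \<forall>t\<ge>T. norm (r t - rh t) \<le> sqrt (4 * D\<^sup>2 + 1) \<and>
                     norm (f t - (x t + fp t)) \<le> sqrt (4 * D\<^sup>2 + 1)"
      using eventually_errors_le[OF D] unfolding eventually_at_top_linorder by simp
  qed
qed

lemma unit_gain_observer_tendsto_zero:
  assumes "(\<lambda>t. (norm (d t))\<^sup>2) integrable_on {0..}"
    and "observer_equations 1 1 1 1 x c xh rh fp z"
  shows "((\<lambda>t. r t - rh t) \<longlongrightarrow> 0) at_top" "((\<lambda>t. f t - (x t + fp t)) \<longlongrightarrow> 0) at_top"
proof -
  interpret unit_gain_error_dynamics
    "\<lambda>t. x t - xh t" "\<lambda>t. f t - (x t + fp t)" "\<lambda>t. r t - rh t" d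
    by (rule unit_gain_observer_error_dynamics[OF assms(2)])
  show "((\<lambda>t. r t - rh t) \<longlongrightarrow> 0) at_top" "((\<lambda>t. f t - (x t + fp t)) \<longlongrightarrow> 0) at_top"
    using errors_tendsto_zero[OF assms(1)] by simp_all
qed

end

theorem theorem1:
  shows "\<exists>k1 k2 k3 k4 :: real. k1 > 0 \<and> k2 > 0 \<and> k3 > 0 \<and> k4 > 0 \<and>
    (\<forall>(n::nat) (A::nat \<Rightarrow> nat \<Rightarrow> real) (\<kappa>::real) (i::nat)
        (r::nat \<Rightarrow> real \<Rightarrow> real^'m) (f::nat \<Rightarrow> real \<Rightarrow> real^'m)
        (df::real \<Rightarrow> real^'m) (x::nat \<Rightarrow> real \<Rightarrow> real^'m).
      adjacency_matrix n A \<and> graph_connected n A \<and> \<kappa> > 0 \<and> i < n \<and>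
      (\<forall>j<n. \<forall>t\<ge>0. (r j has_vector_derivative f j t) (at t within {0..})) \<and>
      (\<forall>j<n. \<forall>t\<ge>0. (x j has_vector_derivative (f j t + coupling n A \<kappa> x j t)) (at t within {0..})) \<and>
      (\<forall>j<n. x j 0 = r j 0) \<and>
      (\<forall>t\<ge>0. (f i has_vector_derivative df t) (at t within {0..})) \<and>
      bounded (r i ` {0..}) \<and> bounded (f i ` {0..}) \<and> bounded (df ` {0..})
      \<longrightarrow>
      (\<exists>b::real. \<forall>(xh::real \<Rightarrow> real^'m) (rh::real \<Rightarrow> real^'m) (fp::real \<Rightarrow> real^'m) (z::real \<Rightarrow> real^'m).
         (\<forall>t\<ge>0. (xh has_vector_derivative
                     ((k3 *\<^sub>R x i t + fp t) + coupling n A \<kappa> x i t + k1 *\<^sub>R (x i t - xh t)))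
                   (at t within {0..})) \<and>
         (\<forall>t\<ge>0. (rh has_vector_derivative
                     (k2 *\<^sub>R (x i t - z t - rh t) + (k3 *\<^sub>R x i t + fp t)))
                   (at t within {0..})) \<and>
         (\<forall>t\<ge>0. (fp has_vector_derivative
                     (- k3 *\<^sub>R ((k3 *\<^sub>R x i t + fp t) + coupling n A \<kappa> x i t)
                      + k4 *\<^sub>R (x i t - xh t)))
                   (at t within {0..})) \<and>
         (\<forall>t\<ge>0. (z has_vector_derivative coupling n A \<kappa> x i t) (at t within {0..})) \<and>
         z 0 = 0
         \<longrightarrow>
         (\<exists>T. \<forall>t\<ge>T. norm (r i t - rh t) \<le> b \<and> norm (f i t - (k3 *\<^sub>R x i t + fp t)) \<le> b)) \<and>
      ((\<lambda>t. (norm (df t))\<^sup>2) integrable_on {0..} \<longrightarrow>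
        (\<forall>(xh::real \<Rightarrow> real^'m) (rh::real \<Rightarrow> real^'m) (fp::real \<Rightarrow> real^'m) (z::real \<Rightarrow> real^'m).
         (\<forall>t\<ge>0. (xh has_vector_derivative
                     ((k3 *\<^sub>R x i t + fp t) + coupling n A \<kappa> x i t + k1 *\<^sub>R (x i t - xh t)))
                   (at t within {0..})) \<and>
         (\<forall>t\<ge>0. (rh has_vector_derivative
                     (k2 *\<^sub>R (x i t - z t - rh t) + (k3 *\<^sub>R x i t + fp t)))
                   (at t within {0..})) \<and>
         (\<forall>t\<ge>0. (fp has_vector_derivative
                     (- k3 *\<^sub>R ((k3 *\<^sub>R x i t + fp t) + coupling n A \<kappa> x i t)
                      + k4 *\<^sub>R (x i t - xh t)))
                   (at t within {0..})) \<and>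
         (\<forall>t\<ge>0. (z has_vector_derivative coupling n A \<kappa> x i t) (at t within {0..})) \<and>
         z 0 = 0
         \<longrightarrow>
         ((\<lambda>t. r i t - rh t) \<longlongrightarrow> 0) at_top \<and>
         ((\<lambda>t. f i t - (k3 *\<^sub>R x i t + fp t)) \<longlongrightarrow> 0) at_top)))"
  apply (rule exI[of _ 1])+
  apply (intro conjI zero_less_one allI impI; elim conjE; unfold scaleR_one)
  subgoal for n A \<kappa> i r f df x
    by (rule unit_gain_observer_ultimately_bounded[where r = "r i" and f = "f i" and x = "x i"
          and c = "coupling n A \<kappa> x i" and d = df, unfolded observer_equations_def scaleR_one]) auto
  subgoal for n A \<kappa> i r f df x
    by (rule unit_gain_observer_tendsto_zero(1)[where r = "r i" and f = "f i" and x = "x i"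
          and c = "coupling n A \<kappa> x i" and d = df, unfolded observer_equations_def scaleR_one]) auto
  subgoal for n A \<kappa> i r f df x
    by (rule unit_gain_observer_tendsto_zero(2)[where r = "r i" and f = "f i" and x = "x i"
          and c = "coupling n A \<kappa> x i" and d = df, unfolded observer_equations_def scaleR_one]) auto
  done

end
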